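(* Let $\alpha\in(0,1]$, $r\in\mathbb{R}$ and $\gamma\ge 1$. For every policy $\pi\in\Pi$, $\mathcal{U}^{r,\pi}_{\alpha,\gamma}\subseteq \mathcal{S}^{r,\pi}_\alpha$. Moreover, $\mathcal{U}^{r}_{\alpha,\gamma}\subseteq \mathcal{S}^{r}_\alpha$.
   Context: Setting: $S$, $A$, $W$ are Borel spaces (states, controls, disturbances), $T\in\mathbb{N}$. The sample space is $\Omega = (S\times A)^T\times S$ with its Borel $\sigma$-algebra $\mathcal{B}(\Omega)$; for $\omega=(x_0,u_0,\dots,x_{T-1},u_{T-1},x_T)$, $X_t(\omega)=x_t$ and $U_t(\omega)=u_t$. A Borel-measurable map $f:S\times A\times W\to S$ and a probability distribution $P_D$ on $W$ define the transition kernel $Q(B\mid x,u) = P_D(\{d\in W: f(x,u,d)\in B\})$ for $B\in\mathcal{B}(S)$. $\Pi$ is the set of randomized history-dependent policies $\pi=(\pi_0,\dots,\pi_{T-1})$, each $\pi_t$ a Borel-measurable stochastic kernel on $A$ given $H^t=(S\times A)^t\times S$. For $x\in S$, $\pi\in\Pi$, $P_x^\pi$ is the unique probability measure on $(\Omega,\mathcal{B}(\Omega))$ (Ionescu-Tulcea) under which $X_0=x$, $U_t$ is distributed according to $\pi_t(\cdot\mid X_0,U_0,\dots,X_t)$, and $X_{t+1}$ is distributed according to $Q(\cdot\mid X_t,U_t)$; $E_x^\pi$ denotes expectation under $P_x^\pi$. A constraint set $K\in\mathcal{B}(S)$ and a bounded Borel-measurable $g_K:S\to\mathbb{R}$ are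 given; $G := \max_{t=0,1,\dots,T} g_K(X_t)$. For a probability space $(\Omega,\mathcal{F},\mu)$, $Y\in L^1$ and $\alpha\in(0,1]$, $\mathrm{CVaR}_\alpha(Y) := \inf_{s\in\mathbb{R}}\big(s + \tfrac{1}{\alpha}E(\max(Y-s,0))\big)$. $\mathrm{CVaR}^\pi_{\alpha,x}$ denotes CVaR computed with respect to $P_x^\pi$. Risk-sensitive safe sets: $\mathcal{S}_\alpha^{r,\pi} := \{x\in S : \mathrm{CVaR}^\pi_{\alpha,x}(G)\le r\}$ and $\mathcal{S}_\alpha^{r} := \{x\in S : \inf_{\pi\in\Pi}\mathrm{CVaR}^\pi_{\alpha,x}(G)\le r\}$. Approximation sets: $\mathcal{U}^{r,\pi}_{\alpha,\gamma} := \{x\in S : \tfrac{1}{\alpha}E_x^\pi(\sum_{t=0}^T e^{\gamma g_K(X_t)})\le e^{\gamma r}\}$ and $\mathcal{U}^{r}_{\alpha,\gamma} := \{x\in S : \inf_{\pi\in\Pi}\tfrac{1}{\alpha}E_x^\pi(\sum_{t=0}^T e^{\gamma g_K(X_t)})\le e^{\gamma r}\}$. *)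

theory Defs
  imports "HOL-Probability.Probability"
begin

text \<open>
  States live in the measurable space Sx (carrier type 's), controls in Ax
  (type 'a), disturbances are distributed according to the probability
  measure PD (type 'w).  A history up to time t is a pair (xs, us) with
  xs an extensional function on {..t} (states x_0..x_t) and us an
  extensional function on {..<t} (controls u_0..u_(t-1)).
  The sample space Omega is the history space at time T.
\<close>

definition hist_space :: "'s measure \<Rightarrow> 'a measure \<Rightarrow> nat \<Rightarrow> ((nat \<Rightarrow> 's) \<times> (nat \<Rightarrow> 'a)) measure" where
  "hist_space Sx Ax t = pair_measure (PiM {..t} (\<lambda>_. Sx)) (PiM {..<t} (\<lambda>_. Ax))"

definition trans_kernel :: "'s measure \<Rightarrow> 'w measure \<Rightarrow> ('s \<times> 'a \<times> 'w \<Rightarrow> 's) \<Rightarrow> 's \<Rightarrow> 'a \<Rightarrow> 's measure" where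
  "trans_kernel Sx PD f x u = distr PD Sx (\<lambda>d. f (x, u, d))"

definition policies :: "'s measure \<Rightarrow> 'a measure \<Rightarrow> nat \<Rightarrow> (nat \<Rightarrow> (nat \<Rightarrow> 's) \<times> (nat \<Rightarrow> 'a) \<Rightarrow> 'a measure) set" where
  "policies Sx Ax T = {\<pi>. \<forall>t<T. \<pi> t \<in> hist_space Sx Ax t \<rightarrow>\<^sub>M prob_algebra Ax}"

text \<open>Distribution of the history up to time t (finite-horizon Ionescu-Tulcea construction).\<close>
primrec hist_measure :: "'s measure \<Rightarrow> 'a measure \<Rightarrow> 'w measure \<Rightarrow> ('s \<times> 'a \<times> 'w \<Rightarrow> 's) \<Rightarrow> 's
    \<Rightarrow> (nat \<Rightarrow> (nat \<Rightarrow> 's) \<times> (nat \<Rightarrow> 'a) \<Rightarrow> 'a measure) \<Rightarrow> nat \<Rightarrow> ((nat \<Rightarrow> 's) \<times> (nat \<Rightarrow> 'a)) measure" where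
  "hist_measure Sx Ax PD f x \<pi> 0 =
     return (hist_space Sx Ax 0) (\<lambda>i\<in>{..0}. x, \<lambda>i\<in>{..<0}. undefined)"
| "hist_measure Sx Ax PD f x \<pi> (Suc t) =
     Giry_Monad.bind (hist_measure Sx Ax PD f x \<pi> t) (\<lambda>h.
       Giry_Monad.bind (\<pi> t h) (\<lambda>u.
         Giry_Monad.bind (trans_kernel Sx PD f (fst h t) u) (\<lambda>y.
           return (hist_space Sx Ax (Suc t)) ((fst h)(Suc t := y), (snd h)(t := u)))))"

definition path_measure :: "'s measure \<Rightarrow> 'a measure \<Rightarrow> 'w measure \<Rightarrow> ('s \<times> 'a \<times> 'w \<Rightarrow> 's) \<Rightarrow> nat \<Rightarrow> 's
    \<Rightarrow> (nat \<Rightarrow> (nat \<Rightarrow> 's) \<times> (nat \<Rightarrow> 'a) \<Rightarrow> 'a measure) \<Rightarrow> ((nat \<Rightarrow> 's) \<times> (nat \<Rightarrow> 'a)) measure" where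
  "path_measure Sx Ax PD f T x \<pi> = hist_measure Sx Ax PD f x \<pi> T"

definition CVaR :: "'b measure \<Rightarrow> real \<Rightarrow> ('b \<Rightarrow> real) \<Rightarrow> real" where
  "CVaR M \<alpha> Y = (INF s::real. s + (1 / \<alpha>) * integral\<^sup>L M (\<lambda>\<omega>. max (Y \<omega> - s) 0))"

definition Gmax :: "('s \<Rightarrow> real) \<Rightarrow> nat \<Rightarrow> (nat \<Rightarrow> 's) \<times> (nat \<Rightarrow> 'a) \<Rightarrow> real" where
  "Gmax g T \<omega> = Max ((\<lambda>t. g (fst \<omega> t)) ` {..T})"

definition safe_set_pol where
  "safe_set_pol Sx Ax PD f T g \<alpha> r \<pi> =
     {x \<in> space Sx. CVaR (path_measure Sx Ax PD f T x \<pi>) \<alpha> (Gmax g T) \<le> r}"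

text \<open>Infimum over policies taken in the extended reals (empty infimum = +infinity).\<close>
definition safe_set_inf where
  "safe_set_inf Sx Ax PD f T g \<alpha> r =
     {x \<in> space Sx. (INF \<pi>\<in>policies Sx Ax T. ereal (CVaR (path_measure Sx Ax PD f T x \<pi>) \<alpha> (Gmax g T))) \<le> ereal r}"

definition exp_cost :: "'s measure \<Rightarrow> 'a measure \<Rightarrow> 'w measure \<Rightarrow> ('s \<times> 'a \<times> 'w \<Rightarrow> 's) \<Rightarrow> nat \<Rightarrow> ('s \<Rightarrow> real)
    \<Rightarrow> real \<Rightarrow> real \<Rightarrow> 's \<Rightarrow> (nat \<Rightarrow> (nat \<Rightarrow> 's) \<times> (nat \<Rightarrow> 'a) \<Rightarrow> 'a measure) \<Rightarrow> real" where
  "exp_cost Sx Ax PD f T g \<alpha> \<gamma> x \<pi> =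
     (1 / \<alpha>) * integral\<^sup>L (path_measure Sx Ax PD f T x \<pi>) (\<lambda>\<omega>. \<Sum>t\<le>T. exp (\<gamma> * g (fst \<omega> t)))"

definition approx_set_pol where
  "approx_set_pol Sx Ax PD f T g \<alpha> \<gamma> r \<pi> =
     {x \<in> space Sx. exp_cost Sx Ax PD f T g \<alpha> \<gamma> x \<pi> \<le> exp (\<gamma> * r)}"

definition approx_set_inf where
  "approx_set_inf Sx Ax PD f T g \<alpha> \<gamma> r =
     {x \<in> space Sx. (INF \<pi>\<in>policies Sx Ax T. ereal (exp_cost Sx Ax PD f T g \<alpha> \<gamma> x \<pi>)) \<le> ereal (exp (\<gamma> * r))}"

end

theory Submission imports Defs begin

text \<open>
  The CVaR is an infimum over shifts s, so it suffices to exhibit one good shift. Take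
  s = r - 1/\<gamma>. From max z 0 \<le> exp (z - 1) with z = \<gamma> (G - s) one gets
  max (G - s) 0 \<le> exp (\<gamma> G - \<gamma> r) / \<gamma>, and exp (\<gamma> G) \<le> \<Sum>t\<le>T. exp (\<gamma> g_K(X_t)) because the
  maximum is attained at some t. Integrating, the hypothesis defining the approximation set
  bounds (1/\<alpha>) E max (G - s) 0 by 1/\<gamma>, so the CVaR is at most s + 1/\<gamma> = r. The statement
  for the optimal sets follows since r \<mapsto> exp (\<gamma> r) is strictly increasing: an almost optimal
  policy for the exponential cost is almost optimal for the CVaR bound.
\<close>

lemma measurable_fun_upd_PiM:
  assumes x: "x \<in> N \<rightarrow>\<^sub>M PiM I M" and y: "y \<in> N \<rightarrow>\<^sub>M M i"
  shows "(\<lambda>\<omega>. (x \<omega>)(i := y \<omega>)) \<in> N \<rightarrow>\<^sub>M PiM (insert i I) M"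
proof -
  have "(\<lambda>\<omega> j. if j = i then y \<omega> else x \<omega> j) \<in> N \<rightarrow>\<^sub>M PiM (insert i I) M"
  proof (rule measurable_PiM_single')
    fix j assume "j \<in> insert i I"
    then show "(\<lambda>\<omega>. if j = i then y \<omega> else x \<omega> j) \<in> N \<rightarrow>\<^sub>M M j"
      using y measurable_component_singleton'[OF x measurable_ident_sets[OF refl]]
      by (cases "j = i") auto
  next
    show "(\<lambda>\<omega> j. if j = i then y \<omega> else x \<omega> j) \<in> space N \<rightarrow> (\<Pi>\<^sub>E j\<in>insert i I. space (M j))"
      using measurable_space[OF x] measurable_space[OF y]
      by (auto simp: space_PiM PiE_def Pi_def extensional_def)
  qed
  then show ?thesis
    by (simp add: fun_upd_def)
qed

lemma measurable_hist_extend: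
  "(\<lambda>((h, u), y). ((fst h)(Suc t := y), (snd h)(t := u)))
     \<in> (hist_space Sx Ax t \<Otimes>\<^sub>M Ax) \<Otimes>\<^sub>M Sx \<rightarrow>\<^sub>M hist_space Sx Ax (Suc t)"
proof -
  let ?N = "(hist_space Sx Ax t \<Otimes>\<^sub>M Ax) \<Otimes>\<^sub>M Sx"
  have "(\<lambda>p. (fst (fst (fst p)))(Suc t := snd p)) \<in> ?N \<rightarrow>\<^sub>M PiM {..Suc t} (\<lambda>_. Sx)"
    unfolding atMost_Suc hist_space_def by (rule measurable_fun_upd_PiM) measurable
  moreover have "(\<lambda>p. (snd (fst (fst p)))(t := snd (fst p))) \<in> ?N \<rightarrow>\<^sub>M PiM {..<Suc t} (\<lambda>_. Ax)"
    unfolding lessThan_Suc hist_space_def by (rule measurable_fun_upd_PiM) measurable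
  ultimately show ?thesis
    unfolding hist_space_def[of _ _ "Suc t"] by (auto simp: split_beta' intro!: measurable_Pair)
qed

lemma measurable_trans_kernel:
  assumes PD: "prob_space PD"
    and f_meas: "f \<in> pair_measure Sx (pair_measure Ax PD) \<rightarrow>\<^sub>M Sx"
    and x: "x \<in> N \<rightarrow>\<^sub>M Sx" and u: "u \<in> N \<rightarrow>\<^sub>M Ax"
  shows "(\<lambda>n. trans_kernel Sx PD f (x n) (u n)) \<in> N \<rightarrow>\<^sub>M prob_algebra Sx"
proof -
  have "(\<lambda>n. distr ((\<lambda>_. PD) n) Sx ((\<lambda>n d. f (x n, u n, d)) n)) \<in> N \<rightarrow>\<^sub>M prob_algebra Sx"
  proof (rule measurable_distr_prob_space2[where M = PD])
    show "(\<lambda>_. PD) \<in> N \<rightarrow>\<^sub>M prob_algebra PD"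
      using PD by (simp add: space_prob_algebra)
    show "(\<lambda>(n, d). f (x n, u n, d)) \<in> N \<Otimes>\<^sub>M PD \<rightarrow>\<^sub>M Sx"
      using x u f_meas by measurable
  qed
  then show ?thesis
    by (simp add: trans_kernel_def)
qed

lemma measurable_hist_step:
  assumes PD: "prob_space PD"
    and f_meas: "f \<in> pair_measure Sx (pair_measure Ax PD) \<rightarrow>\<^sub>M Sx"
    and pit: "\<pi> t \<in> hist_space Sx Ax t \<rightarrow>\<^sub>M prob_algebra Ax"
  shows "(\<lambda>h. Giry_Monad.bind (\<pi> t h) (\<lambda>u. Giry_Monad.bind (trans_kernel Sx PD f (fst h t) u)
            (\<lambda>y. return (hist_space Sx Ax (Suc t)) ((fst h)(Suc t := y), (snd h)(t := u)))))
         \<in> hist_space Sx Ax t \<rightarrow>\<^sub>M prob_algebra (hist_space Sx Ax (Suc t))"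
proof -
  let ?H = "hist_space Sx Ax t" and ?H' = "hist_space Sx Ax (Suc t)"
  have state: "(\<lambda>hu. fst (fst hu) t) \<in> ?H \<Otimes>\<^sub>M Ax \<rightarrow>\<^sub>M Sx"
    unfolding hist_space_def by measurable
  have "(\<lambda>hu. Giry_Monad.bind (trans_kernel Sx PD f (fst (fst hu) t) (snd hu))
          (\<lambda>y. return ?H' ((fst (fst hu))(Suc t := y), (snd (fst hu))(t := snd hu))))
        \<in> ?H \<Otimes>\<^sub>M Ax \<rightarrow>\<^sub>M prob_algebra ?H'"
  proof (rule measurable_bind_prob_space2)
    show "(\<lambda>hu. trans_kernel Sx PD f (fst (fst hu) t) (snd hu)) \<in> ?H \<Otimes>\<^sub>M Ax \<rightarrow>\<^sub>M prob_algebra Sx"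
      by (rule measurable_trans_kernel[OF PD f_meas state measurable_snd])
    show "(\<lambda>(hu, y). return ?H' ((fst (fst hu))(Suc t := y), (snd (fst hu))(t := snd hu)))
          \<in> (?H \<Otimes>\<^sub>M Ax) \<Otimes>\<^sub>M Sx \<rightarrow>\<^sub>M prob_algebra ?H'"
      using measurable_compose[OF measurable_hist_extend measurable_return_prob_space]
      by (simp add: split_beta')
  qed
  then show ?thesis
    using measurable_bind_prob_space2[OF pit] by (simp add: split_beta')
qed

lemma hist_measure_in_prob_algebra:
  assumes PD: "prob_space PD"
    and f_meas: "f \<in> pair_measure Sx (pair_measure Ax PD) \<rightarrow>\<^sub>M Sx"
    and x: "x \<in> space Sx" and \<pi>: "\<pi> \<in> policies Sx Ax T"
  shows "t \<le> T \<Longrightarrow> hist_measure Sx Ax PD f x \<pi> t \<in> space (prob_algebra (hist_space Sx Ax t))"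
proof (induction t)
  case 0
  have "(\<lambda>i\<in>{..0::nat}. x, \<lambda>i\<in>{..<0::nat}. undefined) \<in> space (hist_space Sx Ax 0)"
    using x by (auto simp: hist_space_def space_pair_measure space_PiM)
  then show ?case
    by (auto simp: space_prob_algebra prob_space_return)
next
  case (Suc t)
  have "\<pi> t \<in> hist_space Sx Ax t \<rightarrow>\<^sub>M prob_algebra Ax"
    using \<pi> Suc.prems by (auto simp: policies_def)
  note step = measurable_hist_step[where \<pi> = \<pi> and t = t, OF PD f_meas this]
  have "hist_measure Sx Ax PD f x \<pi> t \<in> space (prob_algebra (hist_space Sx Ax t))"
    using Suc by simp
  note measurable_bind_prob_space[OF measurable_const[OF this, where M = "count_space UNIV"] step]
  from measurable_space[OF this, of "()"] show ?case
    by simp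
qed

lemma
  assumes "prob_space PD"
    and "f \<in> pair_measure Sx (pair_measure Ax PD) \<rightarrow>\<^sub>M Sx"
    and "x \<in> space Sx" and "\<pi> \<in> policies Sx Ax T"
  shows prob_space_path_measure: "prob_space (path_measure Sx Ax PD f T x \<pi>)"
    and sets_path_measure: "sets (path_measure Sx Ax PD f T x \<pi>) = sets (hist_space Sx Ax T)"
  using hist_measure_in_prob_algebra[OF assms order_refl]
  by (auto simp: path_measure_def space_prob_algebra)

lemma integrable_max_diff_const:
  fixes Y :: "'b \<Rightarrow> real"
  assumes "prob_space M" "Y \<in> borel_measurable M" "\<And>\<omega>. \<bar>Y \<omega>\<bar> \<le> B"
  shows "integrable M (\<lambda>\<omega>. max (Y \<omega> - s) 0)"
proof -
  interpret prob_space M by fact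
  show ?thesis
  proof (rule integrable_const_bound[where B = "B + \<bar>s\<bar>"])
    show "AE \<omega> in M. norm (max (Y \<omega> - s) 0) \<le> B + \<bar>s\<bar>"
      using assms(3) by (intro AE_I2) (smt (verit) real_norm_def)
  qed (use assms(2) in measurable)
qed

lemma CVaR_le_shift:
  fixes Y :: "'b \<Rightarrow> real"
  assumes M: "prob_space M" and Y: "Y \<in> borel_measurable M" and B: "\<And>\<omega>. \<bar>Y \<omega>\<bar> \<le> B"
    and \<alpha>: "0 < \<alpha>" "\<alpha> \<le> 1"
  shows "CVaR M \<alpha> Y \<le> s + (1 / \<alpha>) * integral\<^sup>L M (\<lambda>\<omega>. max (Y \<omega> - s) 0)"
proof -
  interpret prob_space M by fact
  define \<phi> where "\<phi> s = s + (1 / \<alpha>) * integral\<^sup>L M (\<lambda>\<omega>. max (Y \<omega> - s) 0)" for s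
  \<comment> \<open>The real infimum in CVaR is junk unless bounded below; this is where \<alpha> \<le> 1 is needed.\<close>
  have "-B \<le> \<phi> s" for s
  proof -
    have "max (-B - s) 0 \<le> max (Y \<omega> - s) 0" for \<omega>
      using B[of \<omega>] by (auto simp: abs_le_iff max_def)
    then have "integral\<^sup>L M (\<lambda>_. max (-B - s) 0) \<le> integral\<^sup>L M (\<lambda>\<omega>. max (Y \<omega> - s) 0)"
      by (intro integral_mono integrable_max_diff_const[OF M Y B]) auto
    then have E: "max (-B - s) 0 \<le> integral\<^sup>L M (\<lambda>\<omega>. max (Y \<omega> - s) 0)"
      by (simp add: prob_space del: max_def)
    have "integral\<^sup>L M (\<lambda>\<omega>. max (Y \<omega> - s) 0) * \<alpha> \<le> integral\<^sup>L M (\<lambda>\<omega>. max (Y \<omega> - s) 0)"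
      using \<alpha> by (intro mult_right_le_one_le integral_nonneg_AE) auto
    then have "integral\<^sup>L M (\<lambda>\<omega>. max (Y \<omega> - s) 0) \<le> (1 / \<alpha>) * integral\<^sup>L M (\<lambda>\<omega>. max (Y \<omega> - s) 0)"
      using \<alpha> by (simp add: le_divide_eq)
    with E show ?thesis
      unfolding \<phi>_def by linarith
  qed
  then have "bdd_below (range \<phi>)"
    by (auto intro: bdd_belowI[where m = "-B"])
  then show ?thesis
    unfolding CVaR_def \<phi>_def[symmetric] by (rule cINF_lower) simp
qed

lemma max_le_exp_minus_one: "max z 0 \<le> exp (z - 1 :: real)"
  using exp_ge_add_one_self[of "z - 1"] by auto

lemma CVaR_le_of_exp_moment:
  fixes Y Z :: "'b \<Rightarrow> real"
  assumes M: "prob_space M" and Y: "Y \<in> borel_measurable M" and B: "\<And>\<omega>. \<bar>Y \<omega>\<bar> \<le> B"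
    and Z: "integrable M Z" and exp_le_Z: "\<And>\<omega>. exp (\<gamma> * Y \<omega>) \<le> Z \<omega>"
    and \<gamma>: "0 < \<gamma>" and \<alpha>: "0 < \<alpha>" "\<alpha> \<le> 1"
    and moment: "(1 / \<alpha>) * integral\<^sup>L M Z \<le> exp (\<gamma> * r)"
  shows "CVaR M \<alpha> Y \<le> r"
proof -
  define s where "s = r - 1 / \<gamma>"
  define c where "c = exp (- \<gamma> * r) / \<gamma>"
  have pointwise: "max (Y \<omega> - s) 0 \<le> c * Z \<omega>" for \<omega>
  proof -
    have "max (Y \<omega> - s) 0 = max (\<gamma> * (Y \<omega> - s)) 0 / \<gamma>"
      using \<gamma> by (auto simp: max_def field_simps)
    also have "\<dots> \<le> exp (\<gamma> * (Y \<omega> - s) - 1) / \<gamma>"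
      using \<gamma> by (intro divide_right_mono max_le_exp_minus_one) auto
    also have "\<dots> = c * exp (\<gamma> * Y \<omega>)"
      using \<gamma> by (simp add: c_def s_def algebra_simps flip: exp_add)
    also have "\<dots> \<le> c * Z \<omega>"
      using \<gamma> by (intro mult_left_mono exp_le_Z) (simp add: c_def)
    finally show ?thesis .
  qed
  have "integral\<^sup>L M (\<lambda>\<omega>. max (Y \<omega> - s) 0) \<le> integral\<^sup>L M (\<lambda>\<omega>. c * Z \<omega>)"
    using pointwise Z by (intro integral_mono integrable_max_diff_const[OF M Y B]) auto
  also have "\<dots> = c * integral\<^sup>L M Z"
    by simp
  also have "\<dots> \<le> c * (\<alpha> * exp (\<gamma> * r))"
    using moment \<alpha> \<gamma> by (intro mult_left_mono) (auto simp: c_def field_simps)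
  also have "\<dots> = \<alpha> / \<gamma>"
    by (simp add: c_def mult_exp_exp)
  finally have "(1 / \<alpha>) * integral\<^sup>L M (\<lambda>\<omega>. max (Y \<omega> - s) 0) \<le> 1 / \<gamma>"
    using \<alpha> by (simp add: field_simps)
  then show ?thesis
    using CVaR_le_shift[OF M Y B \<alpha>, of s] by (simp add: s_def)
qed

lemma Gmax_attained: "\<exists>t\<le>T. Gmax g T \<omega> = g (fst \<omega> t)"
proof -
  have "Gmax g T \<omega> \<in> (\<lambda>t. g (fst \<omega> t)) ` {..T}"
    unfolding Gmax_def by (intro Max_in) auto
  then show ?thesis
    by auto
qed

lemma abs_Gmax_le: "(\<And>y. \<bar>g y\<bar> \<le> B) \<Longrightarrow> \<bar>Gmax g T \<omega>\<bar> \<le> B"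
  using Gmax_attained[of T g \<omega>] by auto

lemma exp_Gmax_le_sum: "exp (\<gamma> * Gmax g T \<omega>) \<le> (\<Sum>t\<le>T. exp (\<gamma> * g (fst \<omega> t)))"
proof -
  obtain t where "t \<le> T" "Gmax g T \<omega> = g (fst \<omega> t)"
    using Gmax_attained by blast
  then show ?thesis
    by (auto intro: member_le_sum[where f = "\<lambda>t. exp (\<gamma> * g (fst \<omega> t))"])
qed

lemma measurable_state_hist:
  assumes "t \<le> T" "g \<in> borel_measurable Sx"
  shows "(\<lambda>\<omega>. g (fst \<omega> t)) \<in> borel_measurable (hist_space Sx Ax T)"
proof -
  have "t \<in> {..T}"
    using assms(1) by simp
  then show ?thesis
    unfolding hist_space_def using assms(2) by measurable
qed

lemma measurable_Gmax:
  "g \<in> borel_measurable Sx \<Longrightarrow> Gmax g T \<in> borel_measurable (hist_space Sx Ax T)"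
  unfolding Gmax_def using measurable_state_hist by (intro borel_measurable_Max) auto

lemma CVaR_path_measure_le:
  fixes Sx :: "'s measure" and Ax :: "'a measure"
  assumes PD: "prob_space PD"
    and f_meas: "f \<in> pair_measure Sx (pair_measure Ax PD) \<rightarrow>\<^sub>M Sx"
    and g_meas: "g \<in> borel_measurable Sx" and g_bdd: "bounded (range g)"
    and \<gamma>: "0 < \<gamma>" and \<alpha>: "0 < \<alpha>" "\<alpha> \<le> 1"
    and x: "x \<in> space Sx" and \<pi>: "\<pi> \<in> policies Sx Ax T"
    and cost: "exp_cost Sx Ax PD f T g \<alpha> \<gamma> x \<pi> \<le> exp (\<gamma> * r)"
  shows "CVaR (path_measure Sx Ax PD f T x \<pi>) \<alpha> (Gmax g T) \<le> r"
proof -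
  let ?P = "path_measure Sx Ax PD f T x \<pi>"
  let ?Z = "\<lambda>\<omega> :: (nat \<Rightarrow> 's) \<times> (nat \<Rightarrow> 'a). \<Sum>t\<le>T. exp (\<gamma> * g (fst \<omega> t))"
  note P = prob_space_path_measure[OF PD f_meas x \<pi>]
  note measurable_P = measurable_cong_sets[OF sets_path_measure[OF PD f_meas x \<pi>] refl]
  obtain B where B: "\<And>y. \<bar>g y\<bar> \<le> B"
    using g_bdd by (auto simp: bounded_iff)
  have "?Z \<omega> \<le> (\<Sum>t\<le>T. exp (\<gamma> * B))" for \<omega>
    using B \<gamma> by (intro sum_mono) (simp add: abs_le_iff)
  then have "integrable ?P ?Z"
  proof (intro finite_measure.integrable_const_bound[OF prob_space.finite_measure[OF P]] AE_I2)
    show "norm (?Z \<omega>) \<le> (\<Sum>t\<le>T. exp (\<gamma> * B))" if "\<And>\<omega>. ?Z \<omega> \<le> (\<Sum>t\<le>T. exp (\<gamma> * B))" for \<omega>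
      using that[of \<omega>] by (simp add: sum_nonneg)
    show "?Z \<in> borel_measurable ?P"
      unfolding measurable_P using measurable_state_hist[OF _ g_meas] by (intro borel_measurable_sum
        measurable_compose[OF _ borel_measurable_exp] borel_measurable_times borel_measurable_const) auto
  qed
  then show ?thesis
    using cost by (intro CVaR_le_of_exp_moment[OF P _ abs_Gmax_le[OF B] _ exp_Gmax_le_sum \<gamma> \<alpha>])
      (auto simp: measurable_P measurable_Gmax[OF g_meas] exp_cost_def)
qed

lemma INF_ereal_le_of_strict_mono:
  fixes a b :: "'p \<Rightarrow> real" and h :: "real \<Rightarrow> real"
  assumes h: "strict_mono h"
    and transfer: "\<And>p r'. p \<in> P \<Longrightarrow> a p \<le> h r' \<Longrightarrow> b p \<le> r'"
    and inf_a: "(INF p\<in>P. ereal (a p)) \<le> ereal (h r)"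
  shows "(INF p\<in>P. ereal (b p)) \<le> ereal r"
proof (rule ereal_le_epsilon2)
  fix e :: real assume "0 < e"
  then have "ereal (h r) < ereal (h (r + e))"
    using h by (simp add: strict_mono_less)
  with inf_a have "(INF p\<in>P. ereal (a p)) < ereal (h (r + e))"
    by (rule order.strict_trans1)
  then obtain p where p: "p \<in> P" and "ereal (a p) < ereal (h (r + e))"
    by (auto simp: INF_less_iff)
  then have "b p \<le> r + e"
    by (intro transfer) auto
  then show "(INF p\<in>P. ereal (b p)) \<le> ereal r + ereal e"
    using p by (intro INF_lower2) auto
qed

theorem theorem2:
  fixes Sx :: "'s measure" and Ax :: "'a measure" and PD :: "'w measure"
    and f :: "'s \<times> 'a \<times> 'w \<Rightarrow> 's" and T :: nat
    and K :: "'s set" and g :: "'s \<Rightarrow> real"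
    and \<alpha> \<gamma> r :: real
  assumes PD: "prob_space PD"
    and f_meas: "f \<in> pair_measure Sx (pair_measure Ax PD) \<rightarrow>\<^sub>M Sx"
    and K: "K \<in> sets Sx"
    and g_meas: "g \<in> borel_measurable Sx"
    and g_bdd: "bounded (range g)"
    and \<alpha>: "0 < \<alpha>" "\<alpha> \<le> 1"
    and \<gamma>: "\<gamma> \<ge> 1"
  shows "(\<forall>\<pi>\<in>policies Sx Ax T.
            approx_set_pol Sx Ax PD f T g \<alpha> \<gamma> r \<pi> \<subseteq> safe_set_pol Sx Ax PD f T g \<alpha> r \<pi>)
         \<and> approx_set_inf Sx Ax PD f T g \<alpha> \<gamma> r \<subseteq> safe_set_inf Sx Ax PD f T g \<alpha> r"
proof -
  have \<gamma>_pos: "0 < \<gamma>"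
    using \<gamma> by simp
  note CVaR_le = CVaR_path_measure_le[OF PD f_meas g_meas g_bdd \<gamma>_pos \<alpha>]
  have "strict_mono (\<lambda>r. exp (\<gamma> * r))"
    using \<gamma>_pos by (intro strict_monoI) simp
  note INF_le = INF_ereal_le_of_strict_mono[OF this]
  show ?thesis
  proof (intro conjI ballI subsetI)
    fix \<pi> x
    assume "\<pi> \<in> policies Sx Ax T" "x \<in> approx_set_pol Sx Ax PD f T g \<alpha> \<gamma> r \<pi>"
    then show "x \<in> safe_set_pol Sx Ax PD f T g \<alpha> r \<pi>"
      using CVaR_le by (simp add: approx_set_pol_def safe_set_pol_def)
  next
    fix x
    assume "x \<in> approx_set_inf Sx Ax PD f T g \<alpha> \<gamma> r"
    then have x: "x \<in> space Sx"
      and inf_cost: "(INF \<pi>\<in>policies Sx Ax T. ereal (exp_cost Sx Ax PD f T g \<alpha> \<gamma> x \<pi>)) \<le> ereal (exp (\<gamma> * r))"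
      by (auto simp: approx_set_inf_def)
    have "(INF \<pi>\<in>policies Sx Ax T. ereal (CVaR (path_measure Sx Ax PD f T x \<pi>) \<alpha> (Gmax g T))) \<le> ereal r"
      by (rule INF_le[OF CVaR_le[OF x] inf_cost])
    with x show "x \<in> safe_set_inf Sx Ax PD f T g \<alpha> r"
      by (simp add: safe_set_inf_def)
  qed
qed

end
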